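(* Let $n\ge1$ and let $\mathcal P_n$ be the set of peakless weak Dyck paths with exactly $n$ steps of type $U$ or $H$. Executing a path $P\in\mathcal P_n$ with a stack (reading $U$ as push, $D$ as pop, $H$ as direct transfer) is always possible and yields a permutation $S(P)$; the map $S$ is a bijection from $\mathcal P_n$ onto the set of $312$-avoiding permutations of $\{1,\ldots,n\}$. Executing $P$ with a queue (reading $U$ as enqueue, $D$ as dequeue, $H$ as direct transfer) yields a permutation $Q(P)$; the map $Q$ is a bijection from $\mathcal P_n$ onto the set of $321$-avoiding permutations of $\{1,\ldots,n\}$. Consequently $|\mathcal P_n|=C_n=\frac{1}{2n+1}\binom{2n+1}{n+1}$, the number of $321$-avoiding permutations of $\{1,\ldots,n\}$ equals $C_n$, and $Q\circ S^{-1}$ is a bijection from $312$-avoiding permutations onto $321$-avoiding permutations of $\{1,\ldots,n\}$.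
   Context: A weak Dyck path is a finite word in the steps $U=(1,1)$, $D=(1,-1)$, $H=(1,0)$ whose lattice path starts at height $0$, ends at height $0$ and never goes below height $0$. It is peakless if no $U$ is immediately followed by $D$. Executing a path: input is $1,2,\ldots,n$ in order, storage (stack or queue) and output initially empty; the steps are performed in order, where push/enqueue moves the next input element into the storage (top of stack / back of queue), pop/dequeue moves the top of the stack / front of the queue to the end of the output, and direct transfer moves the next input element to the end of the output. A permutation avoids $312$ (resp. $321$) if there are no $i<j<k$ with $p_j<p_k<p_i$ (resp. $p_i>p_j>p_k$). *)

theory Defs
  imports Complex_Main
begin

datatype step = U | D | H

fun step_val :: "step \<Rightarrow> int" where
  "step_val U = 1" | "step_val D = -1" | "step_val H = 0"

definition height :: "step list \<Rightarrow> int" where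
  "height w = sum_list (map step_val w)"

definition weak_dyck :: "step list \<Rightarrow> bool" where
  "weak_dyck w \<longleftrightarrow> (\<forall>k\<le>length w. 0 \<le> height (take k w)) \<and> height w = 0"

definition peakless :: "step list \<Rightarrow> bool" where
  "peakless w \<longleftrightarrow> (\<forall>i. Suc i < length w \<longrightarrow> \<not> (w ! i = U \<and> w ! Suc i = D))"

definition num_UH :: "step list \<Rightarrow> nat" where
  "num_UH w = length (filter (\<lambda>s. s \<noteq> D) w)"

definition peakless_paths :: "nat \<Rightarrow> step list set" where
  "peakless_paths n = {w. weak_dyck w \<and> peakless w \<and> num_UH w = n}"

fun run_stack :: "step list \<Rightarrow> nat list \<Rightarrow> nat list \<Rightarrow> nat list \<Rightarrow> nat list option" where
  "run_stack [] inp st out = Some out"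
| "run_stack (U # w) (x # inp) st out = run_stack w inp (x # st) out"
| "run_stack (D # w) inp (x # st) out = run_stack w inp st (out @ [x])"
| "run_stack (H # w) (x # inp) st out = run_stack w inp st (out @ [x])"
| "run_stack _ _ _ _ = None"

fun run_queue :: "step list \<Rightarrow> nat list \<Rightarrow> nat list \<Rightarrow> nat list \<Rightarrow> nat list option" where
  "run_queue [] inp q out = Some out"
| "run_queue (U # w) (x # inp) q out = run_queue w inp (q @ [x]) out"
| "run_queue (D # w) inp (x # q) out = run_queue w inp q (out @ [x])"
| "run_queue (H # w) (x # inp) q out = run_queue w inp q (out @ [x])"
| "run_queue _ _ _ _ = None"

definition stack_exec :: "step list \<Rightarrow> nat list option" where
  "stack_exec w = run_stack w [1..<Suc (num_UH w)] [] []"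

definition queue_exec :: "step list \<Rightarrow> nat list option" where
  "queue_exec w = run_queue w [1..<Suc (num_UH w)] [] []"

definition S_map :: "step list \<Rightarrow> nat list" where
  "S_map w = the (stack_exec w)"

definition Q_map :: "step list \<Rightarrow> nat list" where
  "Q_map w = the (queue_exec w)"

definition perms :: "nat \<Rightarrow> nat list set" where
  "perms n = {p. distinct p \<and> set p = {1..n}}"

definition avoids312 :: "nat list \<Rightarrow> bool" where
  "avoids312 p \<longleftrightarrow> \<not> (\<exists>i j k. i < j \<and> j < k \<and> k < length p \<and> p ! j < p ! k \<and> p ! k < p ! i)"

definition avoids321 :: "nat list \<Rightarrow> bool" where
  "avoids321 p \<longleftrightarrow> \<not> (\<exists>i j k. i < j \<and> j < k \<and> k < length p \<and> p ! i > p ! j \<and> p ! j > p ! k)"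

definition av312 :: "nat \<Rightarrow> nat list set" where
  "av312 n = {p \<in> perms n. avoids312 p}"

definition av321 :: "nat \<Rightarrow> nat list set" where
  "av321 n = {p \<in> perms n. avoids321 p}"

end

theory Submission
  imports Defs
begin

(* Fix a storage discipline (stack or queue). Reading the output permutation from
   left to right, each entry x is either a new input (larger than every input read so
   far, say m), produced by the block U^(x-m-1) H that stores m+1..x-1 and transfers x,
   or it must be the element the storage releases (a D step). This defines an encoding
   code of outputs as paths, and a predicate admissible stating that the storage really
   releases the required element at every D step (the maximum of the stored set for a
   stack, the minimum for a queue). *)

fun dyck_from :: "int \<Rightarrow> step list \<Rightarrow> bool" where
  "dyck_from h [] = (h = 0)"
| "dyck_from h (s # w) = (0 \<le> h + step_val s \<and> dyck_from (h + step_val s) w)"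

lemma height_Nil [simp]: "height [] = 0"
  by (simp add: height_def)

lemma height_Cons [simp]: "height (s # w) = step_val s + height w"
  by (simp add: height_def)

lemma all_le_Suc_iff: "(\<forall>k\<le>Suc n. P k) \<longleftrightarrow> P 0 \<and> (\<forall>k\<le>n. P (Suc k))"
proof
  assume "P 0 \<and> (\<forall>k\<le>n. P (Suc k))"
  then show "\<forall>k\<le>Suc n. P k"
    by (metis Suc_le_mono not0_implies_Suc)
qed simp

lemma dyck_from_iff:
  "0 \<le> h \<Longrightarrow> dyck_from h w \<longleftrightarrow>
     (\<forall>k\<le>length w. 0 \<le> h + height (take k w)) \<and> h + height w = 0"
proof (induction w arbitrary: h)
  case Nil
  then show ?case by simp
next
  case (Cons s w)
  have prefixes: "(\<forall>k\<le>length (s # w). 0 \<le> h + height (take k (s # w))) \<longleftrightarrow>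
     (\<forall>k\<le>length w. 0 \<le> (h + step_val s) + height (take k w))"
    using Cons.prems by (simp add: all_le_Suc_iff algebra_simps)
  show ?case
  proof (cases "0 \<le> h + step_val s")
    case True
    then show ?thesis using Cons.IH[OF True] prefixes by (simp add: algebra_simps)
  next
    case False
    then show ?thesis using prefixes by (auto dest: spec[of _ 0])
  qed
qed

lemma weak_dyck_eq: "weak_dyck w = dyck_from 0 w"
  by (simp add: weak_dyck_def dyck_from_iff)

lemma peakless_Nil [simp]: "peakless []"
  by (simp add: peakless_def)

lemma peakless_Cons: "peakless (x # w) \<longleftrightarrow> \<not> (x = U \<and> w \<noteq> [] \<and> hd w = D) \<and> peakless w"
  unfolding peakless_def by (cases w) (auto simp: All_less_Suc2 all_conj_distrib)

lemma num_UH_Nil [simp]: "num_UH [] = 0"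
  by (simp add: num_UH_def)

lemma num_UH_Cons [simp]: "num_UH (s # w) = (if s = D then 0 else 1) + num_UH w"
  by (simp add: num_UH_def)

text \<open>Stack and queue executions differ only in where an input element is stored; in
  both cases the element released by a D step is the head of the storage list.\<close>
fun run :: "(nat \<Rightarrow> nat list \<Rightarrow> nat list) \<Rightarrow> step list \<Rightarrow> nat list \<Rightarrow> nat list \<Rightarrow> nat list
    \<Rightarrow> nat list option" where
  "run push [] inp st out = Some out"
| "run push (U # w) (x # inp) st out = run push w inp (push x st) out"
| "run push (D # w) inp (x # st) out = run push w inp st (out @ [x])"
| "run push (H # w) (x # inp) st out = run push w inp st (out @ [x])"
| "run push _ _ _ _ = None"

lemma run_stack_eq: "run_stack w inp st out = run Cons w inp st out"
  by (induction w inp st out rule: run_stack.induct) auto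

lemma run_queue_eq: "run_queue w inp q out = run (\<lambda>x q. q @ [x]) w inp q out"
  by (induction w inp q out rule: run_queue.induct) auto

lemma run_Us:
  "run push (replicate (length l) U @ w) (l @ inp) st out = run push w inp (fold push l st) out"
  by (induction l arbitrary: st) auto

section \<open>Encoding an output sequence as a path\<close>

text \<open>Suppose the inputs up to m have been read. An output x > m is produced by storing
  m+1, ..., x-1 and transferring x directly (U^(x-m-1) H); an output x \<le> m must come
  from the storage (D). This determines the path uniquely from the output.\<close>
fun code :: "nat \<Rightarrow> nat list \<Rightarrow> step list" where
  "code m [] = []"
| "code m (x # xs) =
    (if m < x then replicate (x - m - 1) U @ H # code x xs else D # code m xs)"

text \<open>The output xs can be produced when the inputs up to m have been read and the
  storage holds the set R, provided the storage always releases the element chosen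
  by sel (the maximum for a stack, the minimum for a queue).\<close>
fun admissible :: "(nat set \<Rightarrow> nat) \<Rightarrow> nat \<Rightarrow> nat set \<Rightarrow> nat list \<Rightarrow> bool" where
  "admissible sel m R [] = (R = {})"
| "admissible sel m R (x # xs) =
    (if m < x then admissible sel x (R \<union> {Suc m..<x}) xs
     else x \<in> R \<and> x = sel R \<and> admissible sel m (R - {x}) xs)"

lemma num_UH_Us [simp]: "num_UH (replicate k U @ w) = k + num_UH w"
  by (induction k) auto

lemma dyck_from_Us: "0 \<le> h \<Longrightarrow> dyck_from h (replicate k U @ w) = dyck_from (h + int k) w"
  by (induction k arbitrary: h) (auto simp: algebra_simps)

lemma peakless_Us_H: "peakless (replicate k U @ H # w) = peakless w"
proof (induction k)
  case 0
  then show ?case by (simp add: peakless_Cons)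
next
  case (Suc k)
  have "hd (replicate k U @ H # w) \<noteq> D" by (cases k) auto
  then show ?case using Suc by (simp add: peakless_Cons)
qed

lemma card_insert_range:
  assumes "finite R" "\<forall>y\<in>R. y \<le> m"
  shows "card (R \<union> {Suc m..<x}) = card R + (x - Suc m)"
proof -
  have "R \<inter> {Suc m..<x} = {}" using assms by auto
  then show ?thesis using assms by (simp add: card_Un_disjoint)
qed

lemma admissible_set:
  "admissible sel m R xs \<Longrightarrow> finite R \<Longrightarrow> \<forall>y\<in>R. y \<le> m \<Longrightarrow>
   distinct xs \<and> set xs = R \<union> {Suc m..m + num_UH (code m xs)}"
proof (induction xs arbitrary: m R)
  case Nil
  then show ?case by simp
next
  case (Cons x xs)
  show ?case
  proof (cases "m < x")
    case True
    let ?N = "x + num_UH (code x xs)"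
    have "admissible sel x (R \<union> {Suc m..<x}) xs" "\<forall>y\<in>R \<union> {Suc m..<x}. y \<le> x"
      using Cons.prems True by auto
    with Cons.IH Cons.prems(2)
    have IH: "distinct xs" "set xs = R \<union> {Suc m..<x} \<union> {Suc x..?N}" by auto
    have "m + num_UH (code m (x # xs)) = ?N" using True by simp
    moreover have "{Suc m..?N} = {Suc m..<x} \<union> insert x {Suc x..?N}" using True by auto
    ultimately show ?thesis using IH Cons.prems(3) True by auto
  next
    case False
    then have x: "x \<in> R" "admissible sel m (R - {x}) xs" using Cons.prems by auto
    with Cons.IH Cons.prems(2,3)
    have "distinct xs" "set xs = (R - {x}) \<union> {Suc m..m + num_UH (code m xs)}" by auto
    then show ?thesis using False x(1) Cons.prems(3) by auto
  qed
qed

lemma admissible_dyck_from: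
  "admissible sel m R xs \<Longrightarrow> finite R \<Longrightarrow> \<forall>y\<in>R. y \<le> m \<Longrightarrow>
   dyck_from (int (card R)) (code m xs)"
proof (induction xs arbitrary: m R)
  case Nil
  then show ?case by simp
next
  case (Cons x xs)
  show ?case
  proof (cases "m < x")
    case True
    have "admissible sel x (R \<union> {Suc m..<x}) xs" "\<forall>y\<in>R \<union> {Suc m..<x}. y \<le> x"
      using Cons.prems True by auto
    with Cons.IH Cons.prems(2)
    have "dyck_from (int (card (R \<union> {Suc m..<x}))) (code x xs)" by auto
    then show ?thesis using True card_insert_range[OF Cons.prems(2,3), of x]
      by (simp add: dyck_from_Us algebra_simps)
  next
    case False
    then have x: "x \<in> R" "admissible sel m (R - {x}) xs" using Cons.prems by auto
    have "dyck_from (int (card (R - {x}))) (code m xs)"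
      by (rule Cons.IH[OF x(2)]) (use Cons.prems in auto)
    moreover have "card R \<ge> 1"
      using x(1) Cons.prems(2) by (metis One_nat_def Suc_leI card_gt_0_iff empty_iff)
    ultimately show ?thesis using False x(1) Cons.prems(2) by (simp add: of_nat_diff)
  qed
qed

text \<open>Codes contain no peak, as every block of U steps ends with H.\<close>
lemma peakless_code: "peakless (code m xs)"
  by (induction xs arbitrary: m) (auto simp: peakless_Us_H peakless_Cons)

text \<open>A nonempty peakless path that stays nonnegative either starts with D or with a
  block of U steps followed by H: a block of U steps cannot end the path (the height
  must return to 0) and cannot be followed by D.\<close>
lemma path_first_block:
  assumes "dyck_from h w" "peakless w" "0 \<le> h" "w \<noteq> []"
  shows "(\<exists>w'. w = D # w') \<or> (\<exists>k w'. w = replicate k U @ H # w')"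
  using assms
proof (induction w arbitrary: h)
  case Nil
  then show ?case by simp
next
  case (Cons s w)
  show ?case
  proof (cases s)
    case U
    have w: "dyck_from (h + 1) w" "0 \<le> h + 1" using Cons.prems U by auto
    then have "w \<noteq> []" using Cons.prems(3) by (cases w) auto
    then have "peakless w" "hd w \<noteq> D" using Cons.prems(2) U by (auto simp: peakless_Cons)
    with Cons.IH[OF w(1)] w(2) \<open>w \<noteq> []\<close> obtain k w' where "w = replicate k U @ H # w'"
      by (metis list.sel(1))
    then have "s # w = replicate (Suc k) U @ H # w'" using U by simp
    then show ?thesis by blast
  next
    case H
    then have "s # w = replicate 0 U @ H # w" by simp
    then show ?thesis by blast
  qed simp
qed

text \<open>Conversely every peakless path from height |R| is the code of an admissible output:
  a D step outputs sel R, and a block U^k H outputs m+k+1.\<close>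
lemma path_decode:
  assumes "dyck_from (int (card R)) w" "peakless w" "finite R" "\<forall>y\<in>R. y \<le> m"
    and sel_in: "\<And>R. finite R \<Longrightarrow> R \<noteq> {} \<Longrightarrow> sel R \<in> R"
  shows "\<exists>xs. code m xs = w \<and> admissible sel m R xs"
  using assms(1-4)
proof (induction "length w" arbitrary: w m R rule: less_induct)
  case less
  show ?case
  proof (cases "w = []")
    case True
    then show ?thesis using less.prems by (intro exI[of _ "[]"]) auto
  next
    case False
    from path_first_block[OF less.prems(1,2) _ False]
    consider (D) w' where "w = D # w'" | (UH) k w' where "w = replicate k U @ H # w'"
      by auto
    then show ?thesis
    proof cases
      case D
      then have "card R \<ge> 1" using less.prems(1) by auto
      then have "R \<noteq> {}" by auto
      define x where "x = sel R"
      have x: "x \<in> R" "x \<le> m"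
        using sel_in[OF less.prems(3) \<open>R \<noteq> {}\<close>] less.prems(4) by (auto simp: x_def)
      have "int (card (R - {x})) = int (card R) - 1"
        using x less.prems(3) \<open>card R \<ge> 1\<close> by (simp add: of_nat_diff)
      then obtain xs where "code m xs = w'" "admissible sel m (R - {x}) xs"
        using less.hyps[of w' "R - {x}" m] D less.prems by (auto simp: peakless_Cons)
      then show ?thesis using D x by (intro exI[of _ "x # xs"]) (simp add: x_def)
    next
      case UH
      define x where "x = Suc (m + k)"
      have "dyck_from (int (card (R \<union> {Suc m..<x}))) w'"
        using less.prems(1) UH card_insert_range[OF less.prems(3,4), of x]
        by (simp add: dyck_from_Us x_def algebra_simps)
      moreover have "\<forall>y\<in>R \<union> {Suc m..<x}. y \<le> x" using less.prems(4) by (auto simp: x_def)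
      moreover have "peakless w'" using less.prems(2) UH by (simp add: peakless_Us_H)
      ultimately obtain xs where "code x xs = w'" "admissible sel x (R \<union> {Suc m..<x}) xs"
        using less.hyps[of w' "R \<union> {Suc m..<x}" x] UH less.prems(3) by auto
      then show ?thesis using UH by (intro exI[of _ "x # xs"]) (simp add: x_def)
    qed
  qed
qed

lemma peakless_paths_iff:
  "P \<in> peakless_paths n \<longleftrightarrow> dyck_from 0 P \<and> peakless P \<and> num_UH P = n"
  by (simp add: peakless_paths_def weak_dyck_eq)

lemma upt_split_at:
  assumes "m < x"
  shows "[Suc m..<Suc (x + k)] = [Suc m..<x] @ x # [Suc x..<Suc (x + k)]"
proof -
  have "[Suc m..<Suc (x + k)] = [Suc m..<x] @ [x..<x + Suc k]"
    using upt_add_eq_append[of "Suc m" x "Suc k"] assms by simp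
  then show ?thesis by (simp add: upt_conv_Cons)
qed

text \<open>A storage discipline: push inserts an element, repr R is the storage content
  holding the set R when elements were inserted in increasing order, and sel R is the
  element at the head of that content, i.e.\ the one released by the next D step.\<close>
locale storage =
  fixes push :: "nat \<Rightarrow> nat list \<Rightarrow> nat list"
    and repr :: "nat set \<Rightarrow> nat list"
    and sel :: "nat set \<Rightarrow> nat"
  assumes repr_empty: "repr {} = []"
    and repr_insert: "finite R \<Longrightarrow> \<forall>y\<in>R. y < x \<Longrightarrow> repr (insert x R) = push x (repr R)"
    and repr_remove: "finite R \<Longrightarrow> R \<noteq> {} \<Longrightarrow> repr R = sel R # repr (R - {sel R})"
    and sel_in: "finite R \<Longrightarrow> R \<noteq> {} \<Longrightarrow> sel R \<in> R"
begin

definition execute :: "step list \<Rightarrow> nat list option" where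
  "execute w = run push w [1..<Suc (num_UH w)] [] []"

lemma fold_push_range:
  "finite R \<Longrightarrow> \<forall>y\<in>R. y \<le> m \<Longrightarrow> fold push [Suc m..<x] (repr R) = repr (R \<union> {Suc m..<x})"
proof (induction x)
  case 0
  then show ?case by simp
next
  case (Suc x)
  show ?case
  proof (cases "Suc m \<le> x")
    case True
    have "fold push [Suc m..<Suc x] (repr R) = push x (repr (R \<union> {Suc m..<x}))"
      using Suc True by simp
    also have "\<dots> = repr (insert x (R \<union> {Suc m..<x}))"
      using Suc.prems True by (intro repr_insert[symmetric]) auto
    also have "insert x (R \<union> {Suc m..<x}) = R \<union> {Suc m..<Suc x}"
      using True by auto
    finally show ?thesis .
  qed simp
qed

lemma run_code:
  "admissible sel m R xs \<Longrightarrow> finite R \<Longrightarrow> \<forall>y\<in>R. y \<le> m \<Longrightarrow>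
   run push (code m xs) [Suc m..<Suc (m + num_UH (code m xs))] (repr R) out = Some (out @ xs)"
proof (induction xs arbitrary: m R out)
  case Nil
  then show ?case by simp
next
  case (Cons x xs)
  let ?inp = "[Suc m..<Suc (m + num_UH (code m (x # xs)))]"
  show ?case
  proof (cases "m < x")
    case True
    let ?N = "x + num_UH (code x xs)"
    have "run push (code m (x # xs)) ?inp (repr R) out
        = run push (replicate (length [Suc m..<x]) U @ H # code x xs)
            ([Suc m..<x] @ x # [Suc x..<Suc ?N]) (repr R) out"
      using True by (simp del: upt_Suc add: upt_split_at)
    also have "\<dots> = run push (code x xs) [Suc x..<Suc ?N] (repr (R \<union> {Suc m..<x})) (out @ [x])"
      using Cons.prems by (subst run_Us) (simp del: upt_Suc add: fold_push_range)
    also have "\<dots> = Some ((out @ [x]) @ xs)"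
      using Cons.prems True by (intro Cons.IH) auto
    finally show ?thesis by simp
  next
    case False
    then have x: "x \<in> R" "x = sel R" "admissible sel m (R - {x}) xs" using Cons.prems by auto
    then have "repr R = x # repr (R - {x})" using repr_remove[OF Cons.prems(2)] by auto
    then have "run push (code m (x # xs)) ?inp (repr R) out
        = run push (code m xs) [Suc m..<Suc (m + num_UH (code m xs))] (repr (R - {x})) (out @ [x])"
      using False by simp
    also have "\<dots> = Some ((out @ [x]) @ xs)"
      using Cons.prems x by (intro Cons.IH) auto
    finally show ?thesis by simp
  qed
qed

lemma admissible_perms:
  assumes "admissible sel 0 {} p"
  shows "p \<in> perms (num_UH (code 0 p))"
  using admissible_set[OF assms] by (simp add: perms_def)

lemma execute_code:
  assumes "p \<in> perms n" "admissible sel 0 {} p"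
  shows "code 0 p \<in> peakless_paths n \<and> execute (code 0 p) = Some p"
proof -
  have "{1..num_UH (code 0 p)} = {1..n}"
    using admissible_perms[OF assms(2)] assms(1) by (simp add: perms_def)
  then have n: "num_UH (code 0 p) = n"
    by (metis card_atLeastAtMost diff_Suc_1)
  have "dyck_from 0 (code 0 p)" using admissible_dyck_from[OF assms(2)] by simp
  then have "code 0 p \<in> peakless_paths n"
    using n by (simp add: peakless_paths_iff peakless_code)
  moreover have "execute (code 0 p) = Some p"
    using run_code[OF assms(2), of "[]"] by (simp add: execute_def repr_empty)
  ultimately show ?thesis by simp
qed

lemma path_code:
  assumes "P \<in> peakless_paths n"
  shows "\<exists>p. p \<in> perms n \<and> admissible sel 0 {} p \<and> code 0 p = P"
proof -
  have "dyck_from (int (card {})) P" "peakless P" "num_UH P = n"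
    using assms by (auto simp: peakless_paths_iff)
  moreover obtain p where "code 0 p = P" "admissible sel 0 {} p"
    using path_decode[where R = "{}" and m = 0 and sel = sel] calculation(1,2) sel_in by auto
  ultimately show ?thesis using admissible_perms by blast
qed

theorem execute_bij:
  "(\<forall>P\<in>peakless_paths n. execute P \<noteq> None)
   \<and> bij_betw (the \<circ> execute) (peakless_paths n) {p \<in> perms n. admissible sel 0 {} p}"
proof -
  have "\<forall>P\<in>peakless_paths n. \<exists>p. p \<in> perms n \<and> admissible sel 0 {} p \<and> code 0 p = P
          \<and> execute P = Some p"
    using path_code execute_code by blast
  then show ?thesis
    by (auto intro!: bij_betw_byWitness[where f' = "code 0"] simp: execute_code)
qed

end

lemma sorted_list_of_set_insert_greatest:
  assumes "finite R" "\<forall>y\<in>R. y < x"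
  shows "sorted_list_of_set (insert x R) = sorted_list_of_set R @ [x]"
proof -
  have "R - {x} = R" using assms(2) by auto
  then have "sorted_list_of_set (insert x R) = insort x (sorted_list_of_set R)"
    using assms(1) by (simp add: sorted_list_of_set_insert_remove)
  also have "\<dots> = sorted_list_of_set R @ [x]"
    using assms by (intro sorted_insort_is_snoc) auto
  finally show ?thesis .
qed

lemma sorted_list_of_set_remove_Max:
  assumes "finite (R :: 'a::linorder set)" "R \<noteq> {}"
  shows "sorted_list_of_set R = sorted_list_of_set (R - {Max R}) @ [Max R]"
proof -
  have "R = insert (Max R) (R - {Max R})" using assms Max_in by blast
  moreover have "\<forall>y\<in>R - {Max R}. y < Max R" using assms by (auto simp: order_le_neq_trans)
  ultimately show ?thesis using assms(1) sorted_list_of_set_insert_greatest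
    by (metis finite_Diff)
qed

interpretation stack: storage Cons "\<lambda>R. rev (sorted_list_of_set R)" Max
proof
  fix R :: "nat set" and x
  assume "finite R" "\<forall>y\<in>R. y < x"
  then have "sorted_list_of_set (insert x R) = sorted_list_of_set R @ [x]"
    by (rule sorted_list_of_set_insert_greatest)
  then show "rev (sorted_list_of_set (insert x R)) = x # rev (sorted_list_of_set R)"
    by simp
next
  fix R :: "nat set"
  assume "finite R" "R \<noteq> {}"
  then show "rev (sorted_list_of_set R) = Max R # rev (sorted_list_of_set (R - {Max R}))"
    by (subst sorted_list_of_set_remove_Max) auto
  show "Max R \<in> R" using \<open>finite R\<close> \<open>R \<noteq> {}\<close> by (rule Max_in)
qed simp

interpretation queue: storage "\<lambda>x q. q @ [x]" sorted_list_of_set Min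
proof
  fix R :: "nat set" and x
  assume "finite R" "\<forall>y\<in>R. y < x"
  then show "sorted_list_of_set (insert x R) = sorted_list_of_set R @ [x]"
    by (rule sorted_list_of_set_insert_greatest)
next
  fix R :: "nat set"
  assume "finite R" "R \<noteq> {}"
  then show "sorted_list_of_set R = Min R # sorted_list_of_set (R - {Min R})"
    and "Min R \<in> R"
    by (auto intro: sorted_list_of_set_nonempty)
qed simp

lemma stack_exec_eq: "stack_exec = stack.execute"
  by (auto simp: stack_exec_def stack.execute_def run_stack_eq)

lemma queue_exec_eq: "queue_exec = queue.execute"
  by (auto simp: queue_exec_def queue.execute_def run_queue_eq)

section \<open>Admissibility and pattern avoidance\<close>

text \<open>After the prefix pre of the output has been produced, the inputs up to maxval pre
  have been read, and the stored elements are the pending ones: read but not yet output.\<close>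
definition maxval :: "nat list \<Rightarrow> nat" where
  "maxval pre = Max (insert 0 (set pre))"

definition pending :: "nat list \<Rightarrow> nat set" where
  "pending pre = {1..maxval pre} - set pre"

definition admissible_at :: "(nat set \<Rightarrow> nat) \<Rightarrow> nat list \<Rightarrow> nat \<Rightarrow> bool" where
  "admissible_at sel pre x \<longleftrightarrow> maxval pre < x \<or> (x \<in> pending pre \<and> x = sel (pending pre))"

lemma maxval_Nil [simp]: "maxval [] = 0"
  by (simp add: maxval_def)

lemma maxval_snoc: "maxval (pre @ [x]) = max (maxval pre) x"
proof -
  have "insert 0 (set (pre @ [x])) = insert x (insert 0 (set pre))" by auto
  then show ?thesis unfolding maxval_def by (simp add: Max_insert max.commute)
qed

lemma maxval_ge: "y \<in> set pre \<Longrightarrow> y \<le> maxval pre"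
  by (simp add: maxval_def)

lemma maxval_less_iff: "maxval pre < x \<longleftrightarrow> 0 < x \<and> (\<forall>z\<in>set pre. z < x)"
  by (simp add: maxval_def)

lemma maxval_in: "0 < maxval pre \<Longrightarrow> maxval pre \<in> set pre"
  using Max_in[of "insert 0 (set pre)"] by (auto simp: maxval_def)

lemma pending_Nil [simp]: "pending [] = {}"
  by (simp add: pending_def)

lemma pending_snoc:
  "pending (pre @ [x]) =
     (if maxval pre < x then pending pre \<union> {Suc (maxval pre)..<x} else pending pre - {x})"
  unfolding pending_def maxval_snoc by (auto simp: max_def dest: maxval_ge)

lemma admissible_iff_positions:
  "admissible sel (maxval pre) (pending pre) xs \<longleftrightarrow>
   (\<forall>j<length xs. admissible_at sel (pre @ take j xs) (xs ! j)) \<and> pending (pre @ xs) = {}"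
proof (induction xs arbitrary: pre)
  case Nil
  then show ?case by simp
next
  case (Cons x xs)
  have positions:
    "(\<forall>j<length (x # xs). admissible_at sel (pre @ take j (x # xs)) ((x # xs) ! j))
       \<and> pending (pre @ x # xs) = {}
     \<longleftrightarrow> admissible_at sel pre x
       \<and> (\<forall>j<length xs. admissible_at sel ((pre @ [x]) @ take j xs) (xs ! j))
       \<and> pending ((pre @ [x]) @ xs) = {}"
    by (simp add: All_less_Suc2)
  show ?case
  proof (cases "maxval pre < x")
    case True
    then show ?thesis unfolding positions Cons.IH[of "pre @ [x]", symmetric]
      by (simp add: maxval_snoc pending_snoc admissible_at_def)
  next
    case False
    then show ?thesis unfolding positions Cons.IH[of "pre @ [x]", symmetric]
      by (auto simp: maxval_snoc pending_snoc admissible_at_def max_def)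
  qed
qed

lemma in_set_take_iff: "y \<in> set (take j p) \<longleftrightarrow> (\<exists>i<j. i < length p \<and> p ! i = y)"
  by (auto simp: in_set_conv_nth)

lemma in_set_drop_iff: "y \<in> set (drop j p) \<longleftrightarrow> (\<exists>k. j \<le> k \<and> k < length p \<and> p ! k = y)"
proof
  assume "y \<in> set (drop j p)"
  then obtain k where "k < length (drop j p)" "drop j p ! k = y" by (auto simp: in_set_conv_nth)
  then show "\<exists>k. j \<le> k \<and> k < length p \<and> p ! k = y"
    by (intro exI[of _ "j + k"]) auto
next
  assume "\<exists>k. j \<le> k \<and> k < length p \<and> p ! k = y"
  then obtain k where "j \<le> k" "k < length p" "p ! k = y" by blast
  then show "y \<in> set (drop j p)"
    unfolding in_set_conv_nth by (intro exI[of _ "k - j"]) auto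
qed

lemma pending_perm:
  assumes "p \<in> perms n"
  shows "pending p = {}"
proof -
  have "maxval p \<le> n" using assms by (auto simp: maxval_def perms_def)
  then show ?thesis using assms by (auto simp: pending_def perms_def)
qed

lemma admissible_perm:
  "p \<in> perms n \<Longrightarrow>
   admissible sel 0 {} p \<longleftrightarrow> (\<forall>j<length p. admissible_at sel (take j p) (p ! j))"
  using admissible_iff_positions[of sel "[]" p] pending_perm[of p n] by simp

lemma pending_take:
  assumes "p \<in> perms n"
  shows "pending (take j p) = {y \<in> set (drop j p). \<exists>z\<in>set (take j p). y < z}"
proof -
  have p: "distinct p" "set p = {1..n}" using assms by (auto simp: perms_def)
  have disj: "set (take j p) \<inter> set (drop j p) = {}"
    using p(1) by (rule set_take_disj_set_drop_if_distinct) simp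
  have all: "set p = set (take j p) \<union> set (drop j p)"
    by (metis append_take_drop_id set_append)
  show ?thesis
  proof (intro set_eqI iffI)
    fix y assume y: "y \<in> pending (take j p)"
    then have y_le: "1 \<le> y" "y \<le> maxval (take j p)" "y \<notin> set (take j p)"
      by (auto simp: pending_def)
    then have "maxval (take j p) \<in> set (take j p)" by (intro maxval_in) simp
    with y_le have "y < maxval (take j p)" by (metis le_neq_implies_less)
    moreover have "maxval (take j p) \<le> n"
      using \<open>maxval (take j p) \<in> set (take j p)\<close> p(2) in_set_takeD by fastforce
    then have "y \<in> set p" using y_le p(2) by simp
    ultimately show "y \<in> {y \<in> set (drop j p). \<exists>z\<in>set (take j p). y < z}"
      using all y_le \<open>maxval (take j p) \<in> set (take j p)\<close> by blast
  next
    fix y assume "y \<in> {y \<in> set (drop j p). \<exists>z\<in>set (take j p). y < z}"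
    then obtain z where y: "y \<in> set (drop j p)" and z: "z \<in> set (take j p)" "y < z" by auto
    have "1 \<le> y" using y p(2) in_set_dropD by fastforce
    moreover have "y \<le> maxval (take j p)" using maxval_ge[OF z(1)] z(2) by simp
    moreover have "y \<notin> set (take j p)" using disj y by blast
    ultimately show "y \<in> pending (take j p)" by (simp add: pending_def)
  qed
qed

lemma admissible_at_perm:
  assumes "p \<in> perms n" "j < length p"
  shows "admissible_at sel (take j p) (p ! j) \<longleftrightarrow>
    ((\<exists>z\<in>set (take j p). p ! j < z) \<longrightarrow>
      p ! j = sel (insert (p ! j) {y \<in> set (drop (Suc j) p). \<exists>z\<in>set (take j p). y < z}))"
proof -
  let ?x = "p ! j"
  have p: "distinct p" "set p = {1..n}" using assms(1) by (auto simp: perms_def)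
  have notin: "?x \<notin> set (take j p)"
    using p(1) assms(2) by (auto simp: in_set_take_iff nth_eq_iff_index_eq)
  have "0 < ?x" using p(2) nth_mem[OF assms(2)] by auto
  then have "maxval (take j p) < ?x \<longleftrightarrow> (\<forall>z\<in>set (take j p). z < ?x)"
    by (simp add: maxval_less_iff)
  also have "\<dots> \<longleftrightarrow> (\<forall>z\<in>set (take j p). z \<le> ?x)"
    using notin by (auto intro: le_neq_implies_less)
  also have "\<dots> \<longleftrightarrow> \<not> (\<exists>z\<in>set (take j p). ?x < z)"
    by (auto simp: not_less)
  finally have new: "maxval (take j p) < ?x \<longleftrightarrow> \<not> (\<exists>z\<in>set (take j p). ?x < z)" .
  have "set (drop j p) = insert ?x (set (drop (Suc j) p))"
    using assms(2) by (simp add: Cons_nth_drop_Suc[symmetric])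
  then have pending: "pending (take j p) =
      {y \<in> insert ?x (set (drop (Suc j) p)). \<exists>z\<in>set (take j p). y < z}"
    using pending_take[OF assms(1), of j] by simp
  show ?thesis
  proof (cases "\<exists>z\<in>set (take j p). ?x < z")
    case True
    then have "pending (take j p) = insert ?x {y \<in> set (drop (Suc j) p). \<exists>z\<in>set (take j p). y < z}"
      unfolding pending by blast
    then show ?thesis using True new by (simp add: admissible_at_def)
  next
    case False
    then show ?thesis using new by (simp add: admissible_at_def)
  qed
qed

lemma eq_Max_insert_iff:
  assumes "finite B"
  shows "x = Max (insert x B) \<longleftrightarrow> (\<forall>y\<in>B. y \<le> (x::'a::linorder))"
proof
  assume "x = Max (insert x B)"
  then show "\<forall>y\<in>B. y \<le> x" using assms by (metis Max_ge finite_insert insertCI)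
qed (use assms in \<open>auto intro: Max_eqI[symmetric]\<close>)
lemma eq_Min_insert_iff:
  assumes "finite B"
  shows "x = Min (insert x B) \<longleftrightarrow> (\<forall>y\<in>B. (x::'a::linorder) \<le> y)"
proof
  assume "x = Min (insert x B)"
  then show "\<forall>y\<in>B. x \<le> y" using assms by (metis Min_le finite_insert insertCI)
qed (use assms in \<open>auto intro: Min_eqI[symmetric]\<close>)

lemma below_bounded_le_iff:
  "((\<exists>z\<in>T. x < z) \<longrightarrow> (\<forall>y\<in>Y. (\<exists>z\<in>T. y < z) \<longrightarrow> y \<le> (x::'a::linorder)))
   \<longleftrightarrow> \<not> (\<exists>y\<in>Y. \<exists>z\<in>T. x < y \<and> y < z)"
  by (auto simp: not_le dest: less_trans)

lemma below_bounded_ge_iff: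
  "((\<exists>z\<in>T. x < z) \<longrightarrow> (\<forall>y\<in>Y. (\<exists>z\<in>T. y < z) \<longrightarrow> (x::'a::linorder) \<le> y))
   \<longleftrightarrow> \<not> (\<exists>y\<in>Y. \<exists>z\<in>T. y < x \<and> x < z)"
  by (auto simp: not_le) (meson less_trans leD)

lemma ex_later_earlier_iff:
  "(\<exists>y\<in>set (drop (Suc j) p). \<exists>z\<in>set (take j p). P y z) \<longleftrightarrow>
   (\<exists>i k. i < j \<and> j < k \<and> k < length p \<and> P (p ! k) (p ! i))"
  unfolding Bex_def in_set_take_iff in_set_drop_iff Suc_le_eq by (metis less_trans)

lemma admissible_at_Max_perm:
  assumes "p \<in> perms n" "j < length p"
  shows "admissible_at Max (take j p) (p ! j) \<longleftrightarrow>
    \<not> (\<exists>i k. i < j \<and> j < k \<and> k < length p \<and> p ! j < p ! k \<and> p ! k < p ! i)"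
proof -
  let ?T = "set (take j p)"
  have "admissible_at Max (take j p) (p ! j) \<longleftrightarrow>
      ((\<exists>z\<in>?T. p ! j < z) \<longrightarrow> (\<forall>y\<in>set (drop (Suc j) p). (\<exists>z\<in>?T. y < z) \<longrightarrow> y \<le> p ! j))"
    unfolding admissible_at_perm[OF assms] by (auto simp: eq_Max_insert_iff)
  also have "\<dots> \<longleftrightarrow> \<not> (\<exists>y\<in>set (drop (Suc j) p). \<exists>z\<in>?T. p ! j < y \<and> y < z)"
    by (rule below_bounded_le_iff)
  finally show ?thesis unfolding ex_later_earlier_iff .
qed

lemma admissible_at_Min_perm:
  assumes "p \<in> perms n" "j < length p"
  shows "admissible_at Min (take j p) (p ! j) \<longleftrightarrow>
    \<not> (\<exists>i k. i < j \<and> j < k \<and> k < length p \<and> p ! k < p ! j \<and> p ! j < p ! i)"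
proof -
  let ?T = "set (take j p)"
  have "admissible_at Min (take j p) (p ! j) \<longleftrightarrow>
      ((\<exists>z\<in>?T. p ! j < z) \<longrightarrow> (\<forall>y\<in>set (drop (Suc j) p). (\<exists>z\<in>?T. y < z) \<longrightarrow> p ! j \<le> y))"
    unfolding admissible_at_perm[OF assms] by (auto simp: eq_Min_insert_iff)
  also have "\<dots> \<longleftrightarrow> \<not> (\<exists>y\<in>set (drop (Suc j) p). \<exists>z\<in>?T. y < p ! j \<and> p ! j < z)"
    by (rule below_bounded_ge_iff)
  finally show ?thesis unfolding ex_later_earlier_iff .
qed

lemma av312_eq: "av312 n = {p \<in> perms n. admissible Max 0 {} p}"
proof -
  have "admissible Max 0 {} p \<longleftrightarrow> avoids312 p" if p: "p \<in> perms n" for p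
  proof -
    have "admissible Max 0 {} p \<longleftrightarrow> (\<forall>j<length p. admissible_at Max (take j p) (p ! j))"
      by (rule admissible_perm[OF p])
    also have "\<dots> \<longleftrightarrow>
        (\<forall>j<length p. \<not> (\<exists>i k. i < j \<and> j < k \<and> k < length p \<and> p ! j < p ! k \<and> p ! k < p ! i))"
      by (simp add: admissible_at_Max_perm[OF p])
    also have "\<dots> \<longleftrightarrow> avoids312 p"
      unfolding avoids312_def by (blast dest: less_trans)
    finally show ?thesis .
  qed
  then show ?thesis by (auto simp: av312_def)
qed

lemma av321_eq: "av321 n = {p \<in> perms n. admissible Min 0 {} p}"
proof -
  have "admissible Min 0 {} p \<longleftrightarrow> avoids321 p" if p: "p \<in> perms n" for p
  proof -
    have "admissible Min 0 {} p \<longleftrightarrow> (\<forall>j<length p. admissible_at Min (take j p) (p ! j))"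
      by (rule admissible_perm[OF p])
    also have "\<dots> \<longleftrightarrow>
        (\<forall>j<length p. \<not> (\<exists>i k. i < j \<and> j < k \<and> k < length p \<and> p ! k < p ! j \<and> p ! j < p ! i))"
      by (simp add: admissible_at_Min_perm[OF p])
    also have "\<dots> \<longleftrightarrow> avoids321 p"
      unfolding avoids321_def by (blast dest: less_trans)
    finally show ?thesis .
  qed
  then show ?thesis by (auto simp: av321_def)
qed

section \<open>Counting peakless paths\<close>

definition paths :: "nat \<Rightarrow> nat \<Rightarrow> step list set" where
  "paths h n = {w. dyck_from (int h) w \<and> peakless w \<and> num_UH w = n}"

definition paths_nd :: "nat \<Rightarrow> nat \<Rightarrow> step list set" where
  "paths_nd h n = {w \<in> paths h n. \<not> (\<exists>v. w = D # v)}"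

lemma step_list_cases [case_names Nil U D H]:
  obtains "w = []" | v where "w = U # v" | v where "w = D # v" | v where "w = H # v"
  by (metis list.exhaust step.exhaust)

text \<open>A path from height h has at most 2n+h steps, hence there are finitely many.\<close>
lemma length_le_if_dyck_from: "dyck_from h w \<Longrightarrow> int (length w) \<le> 2 * int (num_UH w) + h"
proof (induction w arbitrary: h)
  case (Cons s w)
  then show ?case by (cases s) fastforce+
qed simp

lemma UNIV_step: "(UNIV :: step set) = {U, D, H}"
  using step.exhaust by auto

lemma finite_paths: "finite (paths h n)"
proof -
  have "paths h n \<subseteq> {w. set w \<subseteq> UNIV \<and> length w \<le> 2 * n + h}"
    using length_le_if_dyck_from by (fastforce simp: paths_def)
  moreover have "finite {w. set w \<subseteq> (UNIV :: step set) \<and> length w \<le> 2 * n + h}"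
    by (rule finite_lists_length_le) (simp add: UNIV_step)
  ultimately show ?thesis by (rule finite_subset)
qed

lemma finite_paths_nd: "finite (paths_nd h n)"
  using finite_paths[of h n] by (simp add: paths_nd_def)

lemma Nil_in_paths: "[] \<in> paths h n \<longleftrightarrow> h = 0 \<and> n = 0"
  by (auto simp: paths_def)

lemma D_Cons_in_paths: "D # v \<in> paths h n \<longleftrightarrow> 0 < h \<and> v \<in> paths (h - 1) n"
  by (cases h) (auto simp: paths_def peakless_Cons)

lemma H_Cons_in_paths: "H # v \<in> paths h n \<longleftrightarrow> 0 < n \<and> v \<in> paths h (n - 1)"
  by (cases n) (auto simp: paths_def peakless_Cons)

text \<open>After a U step the path may not continue with D (no peak).\<close>
lemma U_Cons_in_paths: "U # v \<in> paths h n \<longleftrightarrow> 0 < n \<and> v \<in> paths_nd (Suc h) (n - 1)"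
proof -
  have "peakless (U # v) \<longleftrightarrow> peakless v \<and> \<not> (\<exists>v'. v = D # v')"
    by (cases v) (auto simp: peakless_Cons)
  then show ?thesis
    unfolding paths_nd_def paths_def by (cases n) (auto simp: algebra_simps)
qed

lemmas Cons_in_paths = Nil_in_paths D_Cons_in_paths H_Cons_in_paths U_Cons_in_paths

lemma paths_zero: "paths h 0 = {replicate h D}"
proof -
  have "w \<in> paths h 0 \<longleftrightarrow> w = replicate h D" for w
  proof (induction w arbitrary: h rule: list.induct)
    case (Cons s v)
    then show ?case by (cases s; cases h) (auto simp: Cons_in_paths)
  qed (auto simp: Cons_in_paths)
  then show ?thesis by blast
qed

lemma paths_nd_zero_height: "paths_nd 0 n = paths 0 n"
  by (auto simp: paths_nd_def D_Cons_in_paths)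

lemma paths_Suc_height: "paths (Suc h) n = paths_nd (Suc h) n \<union> (#) D ` paths h n"
proof (intro set_eqI)
  fix w show "w \<in> paths (Suc h) n \<longleftrightarrow> w \<in> paths_nd (Suc h) n \<union> (#) D ` paths h n"
    by (cases w rule: step_list_cases) (auto simp: paths_nd_def D_Cons_in_paths)
qed

lemma paths_nd_Suc: "paths_nd h (Suc n) = (#) H ` paths h n \<union> (#) U ` paths_nd (Suc h) n"
proof (intro set_eqI)
  fix w show "w \<in> paths_nd h (Suc n) \<longleftrightarrow> w \<in> (#) H ` paths h n \<union> (#) U ` paths_nd (Suc h) n"
    by (cases w rule: step_list_cases) (auto simp: paths_nd_def Cons_in_paths)
qed

lemma card_paths_Suc_height:
  "card (paths (Suc h) n) = card (paths_nd (Suc h) n) + card (paths h n)"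
proof -
  have "card (paths (Suc h) n) = card (paths_nd (Suc h) n) + card ((#) D ` paths h n)"
    unfolding paths_Suc_height
    by (rule card_Un_disjoint) (auto simp: finite_paths finite_paths_nd paths_nd_def)
  then show ?thesis by (simp add: card_image)
qed

lemma card_paths_nd_Suc: "card (paths_nd h (Suc n)) = card (paths (Suc h) n)"
proof -
  have "card (paths_nd h (Suc n)) = card ((#) H ` paths h n) + card ((#) U ` paths_nd (Suc h) n)"
    unfolding paths_nd_Suc by (rule card_Un_disjoint) (auto simp: finite_paths finite_paths_nd)
  then show ?thesis by (simp add: card_image card_paths_Suc_height)
qed

text \<open>The ballot numbers C(2n+h, n) - C(2n+h, n-1) satisfy the same recurrences.\<close>
definition ballot :: "nat \<Rightarrow> nat \<Rightarrow> int" where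
  "ballot h n = int ((2 * n + h) choose n)
     - (case n of 0 \<Rightarrow> 0 | Suc k \<Rightarrow> int ((2 * n + h) choose k))"

lemma ballot_zero: "ballot h 0 = 1"
  by (simp add: ballot_def)

lemma ballot_Suc_zero_height: "ballot 0 (Suc n) = ballot 1 n"
proof (cases n)
  case 0
  then show ?thesis by (simp add: ballot_def)
next
  case (Suc k)
  define M where "M = Suc (2 * n)"
  have M: "2 * Suc n + 0 = Suc M" "2 * n + 1 = M" by (simp_all add: M_def)
  have sym: "M choose Suc n = M choose n"
    using binomial_symmetric[of n M] by (simp add: M_def)
  have "ballot 0 (Suc n) = int (Suc M choose Suc n) - int (Suc M choose n)"
    by (simp only: ballot_def M nat.case)
  also have "\<dots> = int (M choose n) - int (M choose k)"
    using binomial_Suc_Suc[of M n] binomial_Suc_Suc[of M k] Suc sym by simp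
  also have "\<dots> = ballot 1 n"
    unfolding ballot_def M using Suc by simp
  finally show ?thesis .
qed

lemma ballot_Suc_Suc: "ballot (Suc h) (Suc n) = ballot h (Suc n) + ballot (Suc (Suc h)) n"
proof (cases n)
  case 0
  then show ?thesis by (simp add: ballot_def)
next
  case (Suc k)
  define N where "N = Suc (Suc (2 * n + h))"
  have N: "2 * Suc n + Suc h = Suc N" "2 * Suc n + h = N" "2 * n + Suc (Suc h) = N"
    by (simp_all add: N_def)
  have "ballot (Suc h) (Suc n) = int (Suc N choose Suc n) - int (Suc N choose n)"
    by (simp only: ballot_def N nat.case)
  also have "\<dots> = (int (N choose Suc n) - int (N choose n)) + (int (N choose n) - int (N choose k))"
    using binomial_Suc_Suc[of N n] binomial_Suc_Suc[of N k] Suc by simp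
  also have "\<dots> = ballot h (Suc n) + ballot (Suc (Suc h)) n"
    unfolding ballot_def N using Suc by simp
  finally show ?thesis .
qed

theorem card_paths: "int (card (paths h n)) = ballot h n"
proof (induction n arbitrary: h)
  case 0
  then show ?case by (simp add: paths_zero ballot_zero)
next
  case (Suc n)
  note IH_n = Suc.IH
  show ?case
  proof (induction h)
    case 0
    have "card (paths 0 (Suc n)) = card (paths 1 n)"
      using card_paths_nd_Suc[of 0 n] by (simp add: paths_nd_zero_height)
    then show ?case using IH_n[of 1] by (simp add: ballot_Suc_zero_height)
  next
    case (Suc h)
    have "card (paths (Suc h) (Suc n)) = card (paths (Suc (Suc h)) n) + card (paths h (Suc n))"
      using card_paths_Suc_height[of h "Suc n"] card_paths_nd_Suc[of "Suc h" n] by simp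
    then show ?case using Suc.IH IH_n[of "Suc (Suc h)"] by (simp add: ballot_Suc_Suc)
  qed
qed

lemma ballot_zero_height:
  assumes "1 \<le> n"
  shows "real_of_int (ballot 0 n) = real ((2 * n + 1) choose (n + 1)) / real (2 * n + 1)"
proof -
  obtain k where n: "n = Suc k" using assms by (cases n) auto
  define T where "T = 2 * n"
  define a b where "a = real (T choose n)" and "b = real (T choose k)"
  have "Suc k * (T choose Suc k) = T * ((T - 1) choose k)" by (rule binomial_absorption)
  moreover have "(T - k) * (T choose k) = T * ((T - 1) choose k)" by (rule binomial_absorb_comp)
  moreover have "T - k = k + 2" using n by (simp add: T_def)
  ultimately have "n * (T choose n) = (n + 1) * (T choose k)"
    using n by simp
  then have "real (n * (T choose n)) = real ((n + 1) * (T choose k))" by (rule arg_cong)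
  then have absorb: "real n * a = (real n + 1) * b"
    unfolding a_def b_def by (simp add: algebra_simps)
  have pascal: "(2 * n + 1) choose (n + 1) = (T choose n) + (T choose k)"
    using binomial_Suc_Suc[of T n] binomial_symmetric[of "Suc n" T] n by (simp add: T_def)
  have "real_of_int (ballot 0 n) = a - b"
    unfolding ballot_def a_def b_def using n by (simp add: T_def)
  then have "real (2 * n + 1) * real_of_int (ballot 0 n) = real (2 * n + 1) * (a - b)"
    by (simp only:)
  also have "\<dots> = 2 * (real n * a) - 2 * (real n * b) + a - b"
    by (simp add: algebra_simps)
  also have "\<dots> = a + b" unfolding absorb by (simp add: algebra_simps)
  also have "\<dots> = real ((2 * n + 1) choose (n + 1))" unfolding pascal a_def b_def by simp
  finally show ?thesis by (simp add: field_simps)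
qed

lemma S_map_eq: "S_map = the \<circ> stack.execute"
  by (auto simp: S_map_def stack_exec_eq)

lemma Q_map_eq: "Q_map = the \<circ> queue.execute"
  by (auto simp: Q_map_def queue_exec_eq)

lemma peakless_paths_eq_paths: "peakless_paths n = paths 0 n"
  by (auto simp: peakless_paths_iff paths_def)

theorem mainTheorem5:
  fixes n :: nat
  assumes "n \<ge> 1"
  shows "(\<forall>P\<in>peakless_paths n. stack_exec P \<noteq> None)
    \<and> bij_betw S_map (peakless_paths n) (av312 n)
    \<and> (\<forall>P\<in>peakless_paths n. queue_exec P \<noteq> None)
    \<and> bij_betw Q_map (peakless_paths n) (av321 n)
    \<and> real (card (peakless_paths n)) = real ((2*n+1) choose (n+1)) / real (2*n+1)
    \<and> real (card (av321 n)) = real ((2*n+1) choose (n+1)) / real (2*n+1)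
    \<and> bij_betw (Q_map \<circ> the_inv_into (peakless_paths n) S_map) (av312 n) (av321 n)"
proof -
  have S_exec: "\<forall>P\<in>peakless_paths n. stack_exec P \<noteq> None"
    and S_bij: "bij_betw S_map (peakless_paths n) (av312 n)"
    using stack.execute_bij[of n] unfolding stack_exec_eq S_map_eq av312_eq by auto
  have Q_exec: "\<forall>P\<in>peakless_paths n. queue_exec P \<noteq> None"
    and Q_bij: "bij_betw Q_map (peakless_paths n) (av321 n)"
    using queue.execute_bij[of n] unfolding queue_exec_eq Q_map_eq av321_eq by auto
  have "real (card (peakless_paths n)) = real ((2*n+1) choose (n+1)) / real (2*n+1)"
    using card_paths[of 0 n] ballot_zero_height[OF assms]
    unfolding peakless_paths_eq_paths by (metis of_int_of_nat_eq)
  moreover have "card (av321 n) = card (peakless_paths n)"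
    using bij_betw_same_card[OF Q_bij] by simp
  moreover have "bij_betw (Q_map \<circ> the_inv_into (peakless_paths n) S_map) (av312 n) (av321 n)"
    by (rule bij_betw_trans[OF bij_betw_the_inv_into[OF S_bij] Q_bij])
  ultimately show ?thesis using S_exec S_bij Q_exec Q_bij by simp
qed

end
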